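(* Suppose $\max_{0\le j\le p}|f_j(\bm X)|\le C_0$ a.s. and $|S_{\bar\gamma}|\lambda_0\le\zeta_0$. Suppose the event $$D^\dagger_{\rm CAL}(\hat\gamma^\top\bm F,\bar\gamma^\top\bm F)+(A_0-1)\lambda_0\|\hat\gamma-\bar\gamma\|_1\le M_0|S_{\bar\gamma}|\lambda_0^2$$ holds for constants $A_0>1$ and $M_0>0$. Then $$\tilde{\mathbb E}[Rw(\bm X;\bar\gamma)\{(\hat\gamma-\bar\gamma)^\top\bm F\}^2]\le\exp(\eta_{01})M_0|S_{\bar\gamma}|\lambda_0^2,\qquad\eta_{01}=(A_0-1)^{-1}M_0C_0\zeta_0.$$
   Context: $\tilde{\mathbb E}$ denotes the sample mean over i.i.d. observations $(\bm X_i,R_i)$, $i=1,\dots,N$, with $R_i\in\{0,1\}$. $\bm F=(f_0(\bm X),\dots,f_p(\bm X))^\top$, and $w(\bm X;\gamma)=\exp(-\gamma^\top\bm F)$. $\hat\gamma,\bar\gamma\in\mathbb R^{p+1}$ are arbitrary vectors. $S_{\bar\gamma}=\{0\}\cup\{j\ge1:\bar\gamma_j\neq0\}$, and $\lambda_0>0$, $\zeta_0>0$. $D^\dagger_{\rm CAL}(\hat\gamma^\top\bm F,\bar\gamma^\top\bm F)=-\tilde{\mathbb E}[R\{\exp(-\hat\gamma^\top\bm F)-\exp(-\bar\gamma^\top\bm F)\}(\hat\gamma-\bar\gamma)^\top\bm F]$, which is nonnegative. *)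

theory Defs
  imports Complex_Main
begin

definition sample_mean :: "nat \<Rightarrow> (nat \<Rightarrow> real) \<Rightarrow> real" where
  "sample_mean N g = (\<Sum>i<N. g i) / real N"

definition linpred :: "nat \<Rightarrow> (nat \<Rightarrow> 'x \<Rightarrow> real) \<Rightarrow> (nat \<Rightarrow> real) \<Rightarrow> 'x \<Rightarrow> real" where
  "linpred p f g x = (\<Sum>j\<le>p. g j * f j x)"

definition weight :: "nat \<Rightarrow> (nat \<Rightarrow> 'x \<Rightarrow> real) \<Rightarrow> (nat \<Rightarrow> real) \<Rightarrow> 'x \<Rightarrow> real" where
  "weight p f g x = exp (- linpred p f g x)"

definition support_set :: "nat \<Rightarrow> (nat \<Rightarrow> real) \<Rightarrow> nat set" where
  "support_set p g = {0} \<union> {j \<in> {1..p}. g j \<noteq> 0}"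

definition l1_dist :: "nat \<Rightarrow> (nat \<Rightarrow> real) \<Rightarrow> (nat \<Rightarrow> real) \<Rightarrow> real" where
  "l1_dist p a b = (\<Sum>j\<le>p. \<bar>a j - b j\<bar>)"

definition D_CAL :: "nat \<Rightarrow> (nat \<Rightarrow> 'x) \<Rightarrow> (nat \<Rightarrow> real) \<Rightarrow> nat \<Rightarrow> (nat \<Rightarrow> 'x \<Rightarrow> real)
    \<Rightarrow> (nat \<Rightarrow> real) \<Rightarrow> (nat \<Rightarrow> real) \<Rightarrow> real" where
  "D_CAL N X R p f gh gb = - sample_mean N (\<lambda>i. R i *
      (exp (- linpred p f gh (X i)) - exp (- linpred p f gb (X i))) *
      linpred p f (\<lambda>j. gh j - gb j) (X i))"

end

theory Submission
  imports Defs
begin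

text \<open>Write h = (gh - gb)^T F. The calibration divergence is the sample mean of
  R w(X; gb) (1 - exp (- h)) h, and each term dominates R w(X; gb) exp (- |h|) h^2.
  Since the divergence is nonnegative, the event forces |gh - gb|_1 <= M0 zeta0 / (A0 - 1),
  hence |h| <= C0 |gh - gb|_1 <= eta01. So the weighted squares are at most exp eta01 times
  the divergence, which the event bounds by M0 |S| lambda0^2.\<close>

lemma one_minus_exp_neg_mult_ge:
  fixes h :: real
  shows "exp (- \<bar>h\<bar>) * h\<^sup>2 \<le> (1 - exp (- h)) * h"
proof (cases "h \<ge> 0")
  case True
  have "(1 + h) * exp (- h) \<le> exp h * exp (- h)"
    using exp_ge_add_one_self[of h] by (simp add: mult_right_mono)
  hence "exp (- h) * h \<le> 1 - exp (- h)" by (simp add: exp_minus_inverse algebra_simps)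
  hence "exp (- h) * h * h \<le> (1 - exp (- h)) * h" using True by (simp add: mult_right_mono)
  thus ?thesis using True by (simp add: power2_eq_square)
next
  case False
  define t where "t = - h"
  have t: "t > 0" using False t_def by simp
  have "exp (- t) * t \<le> t" using t by (simp add: mult_left_le_one_le mult.commute)
  hence "exp (- t) * t \<le> exp t - 1" using exp_ge_add_one_self[of t] by linarith
  hence "exp (- t) * t * t \<le> (exp t - 1) * t" using t by (simp add: mult_right_mono)
  thus ?thesis using t by (simp add: t_def power2_eq_square algebra_simps)
qed

lemma one_minus_exp_neg_mult_nonneg:
  fixes h :: real
  shows "0 \<le> (1 - exp (- h)) * h"
  using order_trans[OF _ one_minus_exp_neg_mult_ge[of h]] by simp

lemma square_le_exp_mult_one_minus_exp_neg:
  fixes h eta :: real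
  assumes "\<bar>h\<bar> \<le> eta"
  shows "h\<^sup>2 \<le> exp eta * ((1 - exp (- h)) * h)"
proof -
  have "h\<^sup>2 = exp \<bar>h\<bar> * (exp (- \<bar>h\<bar>) * h\<^sup>2)" by (simp add: exp_minus_inverse)
  also have "\<dots> \<le> exp \<bar>h\<bar> * ((1 - exp (- h)) * h)"
    by (rule mult_left_mono[OF one_minus_exp_neg_mult_ge]) simp
  also have "\<dots> \<le> exp eta * ((1 - exp (- h)) * h)"
    using assms by (intro mult_right_mono one_minus_exp_neg_mult_nonneg) simp
  finally show ?thesis .
qed

lemma sample_mean_nonneg:
  assumes "\<And>i. i < N \<Longrightarrow> 0 \<le> g i"
  shows "0 \<le> sample_mean N g"
  unfolding sample_mean_def using assms by (intro divide_nonneg_nonneg sum_nonneg) auto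

lemma sample_mean_mono:
  assumes "\<And>i. i < N \<Longrightarrow> g i \<le> g' i"
  shows "sample_mean N g \<le> sample_mean N g'"
  unfolding sample_mean_def using assms by (intro divide_right_mono sum_mono) auto

lemma sample_mean_scale: "sample_mean N (\<lambda>i. c * g i) = c * sample_mean N g"
  unfolding sample_mean_def by (simp add: sum_distrib_left)

lemma linpred_add_diff:
  "linpred p f gh x = linpred p f gb x + linpred p f (\<lambda>j. gh j - gb j) x"
  unfolding linpred_def by (simp add: sum.distrib[symmetric] algebra_simps)

lemma abs_linpred_diff_le:
  assumes "\<And>j. j \<le> p \<Longrightarrow> \<bar>f j x\<bar> \<le> C"
  shows "\<bar>linpred p f (\<lambda>j. a j - b j) x\<bar> \<le> C * l1_dist p a b"
proof -
  have "\<bar>linpred p f (\<lambda>j. a j - b j) x\<bar> \<le> (\<Sum>j\<le>p. \<bar>(a j - b j) * f j x\<bar>)"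
    unfolding linpred_def by (rule sum_abs)
  also have "\<dots> \<le> (\<Sum>j\<le>p. \<bar>a j - b j\<bar> * C)"
    using assms by (intro sum_mono) (auto simp: abs_mult intro: mult_left_mono)
  also have "\<dots> = C * l1_dist p a b"
    unfolding l1_dist_def by (simp add: sum_distrib_left mult.commute)
  finally show ?thesis .
qed

lemma D_CAL_eq_sample_mean:
  "D_CAL N X R p f gh gb = sample_mean N (\<lambda>i. R i * weight p f gb (X i) *
     ((1 - exp (- linpred p f (\<lambda>j. gh j - gb j) (X i))) * linpred p f (\<lambda>j. gh j - gb j) (X i)))"
proof -
  have "- (R i * (exp (- linpred p f gh (X i)) - exp (- linpred p f gb (X i))) *
          linpred p f (\<lambda>j. gh j - gb j) (X i))
        = R i * weight p f gb (X i) *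
          ((1 - exp (- linpred p f (\<lambda>j. gh j - gb j) (X i))) * linpred p f (\<lambda>j. gh j - gb j) (X i))"
    for i
    unfolding weight_def
    by (subst linpred_add_diff[of p f gh _ gb]) (simp add: exp_diff exp_minus field_simps)
  hence "- (\<Sum>i<N. R i * (exp (- linpred p f gh (X i)) - exp (- linpred p f gb (X i))) *
          linpred p f (\<lambda>j. gh j - gb j) (X i))
        = (\<Sum>i<N. R i * weight p f gb (X i) *
          ((1 - exp (- linpred p f (\<lambda>j. gh j - gb j) (X i))) * linpred p f (\<lambda>j. gh j - gb j) (X i)))"
    by (simp add: sum_negf[symmetric])
  thus ?thesis unfolding D_CAL_def sample_mean_def by (simp add: minus_divide_left)
qed

lemma D_CAL_nonneg:
  assumes "\<And>i. i < N \<Longrightarrow> 0 \<le> R i"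
  shows "0 \<le> D_CAL N X R p f gh gb"
  unfolding D_CAL_eq_sample_mean weight_def
  using assms by (intro sample_mean_nonneg mult_nonneg_nonneg one_minus_exp_neg_mult_nonneg) simp_all

lemma weighted_square_mean_le_exp_D_CAL:
  assumes "\<And>i. i < N \<Longrightarrow> 0 \<le> R i"
    and "\<And>i. i < N \<Longrightarrow> \<bar>linpred p f (\<lambda>j. gh j - gb j) (X i)\<bar> \<le> eta"
  shows "sample_mean N (\<lambda>i. R i * weight p f gb (X i) * (linpred p f (\<lambda>j. gh j - gb j) (X i))\<^sup>2)
           \<le> exp eta * D_CAL N X R p f gh gb"
  unfolding D_CAL_eq_sample_mean sample_mean_scale[symmetric]
proof (rule sample_mean_mono)
  fix i assume "i < N"
  define h where "h = linpred p f (\<lambda>j. gh j - gb j) (X i)"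
  have "0 \<le> R i * weight p f gb (X i)" using assms(1)[OF \<open>i < N\<close>] by (simp add: weight_def)
  with square_le_exp_mult_one_minus_exp_neg[OF assms(2)[OF \<open>i < N\<close>, folded h_def]]
  show "R i * weight p f gb (X i) * (linpred p f (\<lambda>j. gh j - gb j) (X i))\<^sup>2
        \<le> exp eta * (R i * weight p f gb (X i) * ((1 - exp (- linpred p f (\<lambda>j. gh j - gb j) (X i))) *
            linpred p f (\<lambda>j. gh j - gb j) (X i)))"
    unfolding h_def[symmetric] by (metis mult_left_mono mult.left_commute)
qed

lemma l1_dist_nonneg: "0 \<le> l1_dist p a b"
  unfolding l1_dist_def by (simp add: sum_nonneg)

lemma l1_bound_of_event:
  fixes D L S lambda zeta A M :: real
  assumes "0 \<le> D" and "D + (A - 1) * lambda * L \<le> M * S * lambda\<^sup>2"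
    and "lambda > 0" and "S * lambda \<le> zeta" and "A > 1" and "M > 0"
  shows "L \<le> M * zeta / (A - 1)"
proof -
  have "lambda * ((A - 1) * L) \<le> lambda * (M * (S * lambda))"
    using assms(1,2) by (simp add: power2_eq_square algebra_simps)
  hence "(A - 1) * L \<le> M * (S * lambda)" using assms(3) by simp
  also have "\<dots> \<le> M * zeta" using assms(4,6) by simp
  finally show ?thesis using assms(5) by (simp add: field_simps)
qed

theorem lemmaS9:
  fixes N p :: nat and X :: "nat \<Rightarrow> 'x" and R :: "nat \<Rightarrow> real"
    and f :: "nat \<Rightarrow> 'x \<Rightarrow> real" and gh gb :: "nat \<Rightarrow> real"
    and C0 lambda0 zeta0 A0 M0 :: real
  assumes R01: "\<forall>i<N. R i \<in> {0, 1}"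
    and bdd: "\<forall>i<N. \<forall>j\<le>p. \<bar>f j (X i)\<bar> \<le> C0"
    and lam: "lambda0 > 0" and zeta: "zeta0 > 0"
    and sparse: "real (card (support_set p gb)) * lambda0 \<le> zeta0"
    and A0: "A0 > 1" and M0: "M0 > 0"
    and event: "D_CAL N X R p f gh gb + (A0 - 1) * lambda0 * l1_dist p gh gb
                 \<le> M0 * real (card (support_set p gb)) * lambda0 ^ 2"
  shows "sample_mean N (\<lambda>i. R i * weight p f gb (X i) * (linpred p f (\<lambda>j. gh j - gb j) (X i))^2)
           \<le> exp (M0 * C0 * zeta0 / (A0 - 1)) * M0 * real (card (support_set p gb)) * lambda0 ^ 2"
proof -
  define S where "S = real (card (support_set p gb))"
  define eta where "eta = M0 * C0 * zeta0 / (A0 - 1)"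
  have R_nonneg: "0 \<le> R i" if "i < N" for i using R01 that by auto
  have D_nonneg: "0 \<le> D_CAL N X R p f gh gb" using R_nonneg by (rule D_CAL_nonneg)
  have l1: "l1_dist p gh gb \<le> M0 * zeta0 / (A0 - 1)"
    using l1_bound_of_event[OF D_nonneg event[folded S_def] lam sparse[folded S_def] A0 M0] .
  have h_bound: "\<bar>linpred p f (\<lambda>j. gh j - gb j) (X i)\<bar> \<le> eta" if "i < N" for i
  proof -
    have C0: "0 \<le> C0" using bdd that by (meson abs_ge_zero order_trans le0)
    have "\<bar>linpred p f (\<lambda>j. gh j - gb j) (X i)\<bar> \<le> C0 * l1_dist p gh gb"
      using bdd that by (intro abs_linpred_diff_le) auto
    also have "\<dots> \<le> eta" unfolding eta_def using mult_left_mono[OF l1 C0] by (simp add: ac_simps)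
    finally show ?thesis .
  qed
  have D_bound: "D_CAL N X R p f gh gb \<le> M0 * S * lambda0\<^sup>2"
    using event[folded S_def] mult_nonneg_nonneg[OF _ l1_dist_nonneg, of "(A0 - 1) * lambda0" p gh gb] A0 lam
    by simp
  have "sample_mean N (\<lambda>i. R i * weight p f gb (X i) * (linpred p f (\<lambda>j. gh j - gb j) (X i))\<^sup>2)
        \<le> exp eta * D_CAL N X R p f gh gb"
    using R_nonneg h_bound by (rule weighted_square_mean_le_exp_D_CAL)
  also have "\<dots> \<le> exp eta * (M0 * S * lambda0\<^sup>2)" using D_bound by simp
  finally show ?thesis unfolding eta_def S_def by (simp add: mult.assoc)
qed

end
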